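(* Let $A$ be a finite-dimensional simple associative algebra over a field. If $c\in A$ satisfies $cA\subseteq[A,A]$, then $c=0$.
   Context: $[A,A]$ denotes the linear span of all commutators $xy-yx$, $x,y\in A$. *)

theory Defs
  imports Complex_Main
begin

definition assoc_algebra :: "('k::field \<Rightarrow> 'a::ring_1 \<Rightarrow> 'a) \<Rightarrow> bool" where
  "assoc_algebra scale \<longleftrightarrow> vector_space scale \<and>
     (\<forall>k x y. scale k (x * y) = scale k x * y \<and> scale k (x * y) = x * scale k y)"

definition fin_dim_algebra :: "('k::field \<Rightarrow> 'a::ring_1 \<Rightarrow> 'a) \<Rightarrow> bool" where
  "fin_dim_algebra scale \<longleftrightarrow> assoc_algebra scale \<and>
     (\<exists>B. finite_dimensional_vector_space scale B)"

definition two_sided_ideal :: "('k::field \<Rightarrow> 'a::ring_1 \<Rightarrow> 'a) \<Rightarrow> 'a set \<Rightarrow> bool" where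
  "two_sided_ideal scale I \<longleftrightarrow> module.subspace scale I \<and>
     (\<forall>a\<in>I. \<forall>x. x * a \<in> I \<and> a * x \<in> I)"

definition simple_algebra :: "('k::field \<Rightarrow> 'a::ring_1 \<Rightarrow> 'a) \<Rightarrow> bool" where
  "simple_algebra scale \<longleftrightarrow> assoc_algebra scale \<and> (0::'a) \<noteq> 1 \<and>
     (\<forall>I. two_sided_ideal scale I \<longrightarrow> I = {0} \<or> I = UNIV)"

definition commutator_space :: "('k::field \<Rightarrow> 'a::ring_1 \<Rightarrow> 'a) \<Rightarrow> 'a set" where
  "commutator_space scale = module.span scale {x * y - y * x | x y. True}"

end

(*
  If c is nonzero, the two-sided ideal generated by c is all of A, and since
  a c b = [a, c b] + c (b a) it is contained in [A,A]; so [A,A] = A.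

  This is impossible. Take a minimal left ideal L = A e with e idempotent and a
  maximal commutative subset F of the division ring e A e. Then F is a field, L is a
  finite-dimensional right F-vector space and A acts on it F-linearly, so A has an
  F-valued trace; it vanishes on [A,A] because F is commutative. The elementary
  operator x |-> sum a_i x f_i (f_i in F) has trace sum trace(a_i) f_i, and by the
  density theorem one of them fixes a vector of an F-basis of L and kills the others.
  Its trace is e, which is nonzero, so the trace is not identically zero.
*)

theory Submission
  imports Defs
begin

definition pairwise_commuting :: "'a::times set \<Rightarrow> bool" where
  "pairwise_commuting S \<longleftrightarrow> (\<forall>f\<in>S. \<forall>g\<in>S. f * g = g * f)"

lemma ex_maximal_commuting_subset:
  fixes D :: "'a::times set"
  shows "\<exists>F\<subseteq>D. pairwise_commuting F \<and> (\<forall>x\<in>D. (\<forall>f\<in>F. x * f = f * x) \<longrightarrow> x \<in> F)"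
proof -
  let ?A = "{S. S \<subseteq> D \<and> pairwise_commuting S}"
  have "\<exists>M\<in>?A. \<forall>X\<in>?A. M \<subseteq> X \<longrightarrow> X = M"
  proof (rule subset_Zorn)
    fix C assume C: "subset.chain ?A C"
    then have CA: "C \<subseteq> ?A" and chain: "\<And>X Y. X \<in> C \<Longrightarrow> Y \<in> C \<Longrightarrow> X \<subseteq> Y \<or> Y \<subseteq> X"
      unfolding subset_chain_def by blast+
    have "pairwise_commuting (\<Union>C)"
      unfolding pairwise_commuting_def
    proof (intro ballI)
      fix f g assume "f \<in> \<Union>C" "g \<in> \<Union>C"
      then obtain X Y where XY: "X \<in> C" "Y \<in> C" "f \<in> X" "g \<in> Y" by blast
      then have "pairwise_commuting X" "pairwise_commuting Y" using CA by blast+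
      then show "f * g = g * f"
        using chain[OF XY(1,2)] XY(3,4) unfolding pairwise_commuting_def by blast
    qed
    moreover have "\<Union>C \<subseteq> D" using CA by blast
    ultimately show "\<exists>U\<in>?A. \<forall>X\<in>C. X \<subseteq> U" by blast
  qed
  then obtain F where "F \<in> ?A" and maximal: "\<forall>X\<in>?A. F \<subseteq> X \<longrightarrow> X = F"
    by (rule bexE)
  then have F: "F \<subseteq> D" "pairwise_commuting F" by simp_all
  have "x \<in> F" if x: "x \<in> D" "\<forall>f\<in>F. x * f = f * x" for x
  proof -
    have "pairwise_commuting (insert x F)"
      using F(2) x(2) unfolding pairwise_commuting_def by auto
    moreover have "insert x F \<subseteq> D" using F(1) x(1) by simp
    ultimately have "insert x F = F" using maximal by (simp add: subset_insertI)
    then show ?thesis by (metis insertI1)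
  qed
  then show ?thesis using F by blast
qed

inductive_set elementary_ops :: "'a::ring_1 set \<Rightarrow> ('a \<Rightarrow> 'a) set" for F :: "'a set" where
  mult: "f \<in> F \<Longrightarrow> (\<lambda>x. a * x * f) \<in> elementary_ops F"
| add: "\<phi> \<in> elementary_ops F \<Longrightarrow> \<psi> \<in> elementary_ops F \<Longrightarrow> (\<lambda>x. \<phi> x + \<psi> x) \<in> elementary_ops F"

lemma elementary_ops_mult_left:
  "\<phi> \<in> elementary_ops F \<Longrightarrow> (\<lambda>x. a * \<phi> x) \<in> elementary_ops F"
proof (induction rule: elementary_ops.induct)
  case (mult f b)
  then show ?case using elementary_ops.mult[of f F "a * b"] by (simp add: mult.assoc)
next
  case (add \<phi> \<psi>)
  then show ?case using elementary_ops.add by (simp add: distrib_left)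
qed

lemma elementary_ops_diff:
  "\<phi> \<in> elementary_ops F \<Longrightarrow> \<psi> \<in> elementary_ops F \<Longrightarrow> (\<lambda>x. \<phi> x - \<psi> x) \<in> elementary_ops F"
  using elementary_ops.add[of \<phi> F "\<lambda>x. - 1 * \<psi> x"] elementary_ops_mult_left[of \<psi> F "- 1"] by simp

locale k_algebra =
  fixes scale :: "'k::field \<Rightarrow> 'a::ring_1 \<Rightarrow> 'a"
  assumes assoc_algebra: "assoc_algebra scale"
begin

sublocale vector_space scale
  using assoc_algebra unfolding assoc_algebra_def by blast

lemma scale_mult_left: "scale k x * y = scale k (x * y)"
  using assoc_algebra unfolding assoc_algebra_def by metis

lemma scale_mult_right: "x * scale k y = scale k (x * y)"
  using assoc_algebra unfolding assoc_algebra_def by metis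

lemma span_mult_left:
  assumes "\<And>g. g \<in> G \<Longrightarrow> x * g \<in> S" and "subspace S" and "u \<in> span G"
  shows "x * u \<in> S"
proof -
  have "subspace {u. x * u \<in> S}"
    by (rule subspaceI) (auto simp: distrib_left scale_mult_right assms(2)
        subspace_0 subspace_add subspace_scale)
  then have "span G \<subseteq> {u. x * u \<in> S}"
    using assms(1) by (intro span_minimal) auto
  then show ?thesis using assms(3) by auto
qed

lemma span_mult_right:
  assumes "\<And>g. g \<in> G \<Longrightarrow> g * x \<in> S" and "subspace S" and "u \<in> span G"
  shows "u * x \<in> S"
proof -
  have "subspace {u. u * x \<in> S}"
    by (rule subspaceI) (auto simp: distrib_right scale_mult_left assms(2)
        subspace_0 subspace_add subspace_scale)
  then have "span G \<subseteq> {u. u * x \<in> S}"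
    using assms(1) by (intro span_minimal) auto
  then show ?thesis using assms(3) by auto
qed

lemma two_sided_ideal_span:
  assumes "\<And>g x. g \<in> G \<Longrightarrow> x * g \<in> G \<and> g * x \<in> G"
  shows "two_sided_ideal scale (span G)"
  unfolding two_sided_ideal_def
proof (intro conjI ballI allI)
  fix a x assume "a \<in> span G"
  then show "x * a \<in> span G" "a * x \<in> span G"
    using assms by (blast intro: span_mult_left span_mult_right span_base)+
qed simp

lemma subspace_commutator_space: "subspace (commutator_space scale)"
  unfolding commutator_space_def by simp

lemma commutator_in_commutator_space: "x * y - y * x \<in> commutator_space scale"
  unfolding commutator_space_def by (rule span_base) blast

lemma two_sided_multiple_in_commutator_space:
  assumes "{c * a | a. True} \<subseteq> commutator_space scale"
  shows "a * c * b \<in> commutator_space scale"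
proof -
  have "a * c * b = (a * (c * b) - (c * b) * a) + c * (b * a)"
    by (simp add: mult.assoc)
  moreover have "c * (b * a) \<in> commutator_space scale"
    using assms by blast
  ultimately show ?thesis
    using subspace_commutator_space commutator_in_commutator_space
    by (metis subspace_add)
qed

definition left_ideal :: "'a set \<Rightarrow> bool" where
  "left_ideal L \<longleftrightarrow> subspace L \<and> (\<forall>a\<in>L. \<forall>x. x * a \<in> L)"

lemma left_ideal_mult_right:
  assumes L: "left_ideal L" shows "left_ideal {l * x | l. l \<in> L}"
  unfolding left_ideal_def
proof (intro conjI ballI allI)
  have L_sub: "subspace L" using L unfolding left_ideal_def by blast
  show "subspace {l * x | l. l \<in> L}"
  proof (rule subspaceI)
    show "0 \<in> {l * x | l. l \<in> L}" using subspace_0[OF L_sub] by force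
  next
    fix u v assume "u \<in> {l * x | l. l \<in> L}" "v \<in> {l * x | l. l \<in> L}"
    then obtain l m where "u = l * x" "v = m * x" "l \<in> L" "m \<in> L" by blast
    then show "u + v \<in> {l * x | l. l \<in> L}"
      using subspace_add[OF L_sub] by (auto intro!: exI[of _ "l + m"] simp: distrib_right)
  next
    fix c u assume "u \<in> {l * x | l. l \<in> L}"
    then obtain l where "u = l * x" "l \<in> L" by blast
    then show "scale c u \<in> {l * x | l. l \<in> L}"
      using subspace_scale[OF L_sub] by (auto simp: scale_mult_left[symmetric])
  qed
  fix a y assume "a \<in> {l * x | l. l \<in> L}"
  then show "y * a \<in> {l * x | l. l \<in> L}"
    using L unfolding left_ideal_def by (auto simp: mult.assoc[symmetric])
qed

lemma left_ideal_annihilator: "left_ideal L \<Longrightarrow> left_ideal {l \<in> L. l * x = 0}"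
  unfolding left_ideal_def
  by (auto simp: subspace_def distrib_right scale_mult_left mult.assoc)

definition minimal_left_ideal :: "'a set \<Rightarrow> bool" where
  "minimal_left_ideal L \<longleftrightarrow> left_ideal L \<and> L \<noteq> {0} \<and>
     (\<forall>L'. left_ideal L' \<longrightarrow> L' \<noteq> {0} \<longrightarrow> L' \<subseteq> L \<longrightarrow> L' = L)"

lemma minimal_left_ideal_generated:
  assumes L: "minimal_left_ideal L" and w: "w \<in> L" "w \<noteq> 0" and v: "v \<in> L"
  shows "\<exists>a. a * w = v"
proof -
  have "left_ideal {a * w | a. a \<in> UNIV}"
    using left_ideal_mult_right[of UNIV w] by (simp add: left_ideal_def)
  moreover have "{a * w | a. a \<in> UNIV} \<noteq> {0}"
    using w by (auto intro!: exI[of _ w] exI[of _ 1])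
  moreover have "{a * w | a. a \<in> UNIV} \<subseteq> L"
    using L w unfolding minimal_left_ideal_def left_ideal_def by blast
  ultimately have "{a * w | a. a \<in> UNIV} = L"
    using L unfolding minimal_left_ideal_def by blast
  then show ?thesis using v by blast
qed

lemma minimal_left_ideal_idempotent:
  assumes L: "minimal_left_ideal L" and xy: "x \<in> L" "y \<in> L" "y * x \<noteq> 0"
  shows "\<exists>e\<in>L. e * e = e \<and> e \<noteq> 0 \<and> (\<forall>v\<in>L. v * e = v)"
proof -
  have L_ideal: "left_ideal L" and L_min: "\<And>L'. left_ideal L' \<Longrightarrow> L' \<noteq> {0} \<Longrightarrow> L' \<subseteq> L \<Longrightarrow> L' = L"
    using L unfolding minimal_left_ideal_def by blast+
  have L_sub: "subspace L" and L_mult: "\<And>a z. a \<in> L \<Longrightarrow> z * a \<in> L"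
    using L_ideal unfolding left_ideal_def by blast+
  have Lx: "{l * x | l. l \<in> L} = L"
  proof (rule L_min[OF left_ideal_mult_right[OF L_ideal]])
    have "y * x \<in> {l * x | l. l \<in> L}" using xy(2) by blast
    then show "{l * x | l. l \<in> L} \<noteq> {0}" using xy(3) by (metis singletonD)
    show "{l * x | l. l \<in> L} \<subseteq> L" using L_mult xy(1) by blast
  qed
  have "x \<in> {l * x | l. l \<in> L}" unfolding Lx by (rule xy(1))
  then obtain e where e: "e \<in> L" "x = e * x" by blast
  have annihilator: "{l \<in> L. l * x = 0} = {0}"
  proof (rule ccontr)
    assume "{l \<in> L. l * x = 0} \<noteq> {0}"
    then have "{l \<in> L. l * x = 0} = L"
      by (intro L_min[OF left_ideal_annihilator[OF L_ideal]]) auto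
    then have "y * x = 0" using xy(2) by (metis (mono_tags, lifting) mem_Collect_eq)
    then show False using xy(3) by contradiction
  qed
  have "e * e - e \<in> L"
    using e subspace_diff[OF L_sub] L_mult by blast
  moreover have "(e * e - e) * x = 0"
    using e(2) by (simp add: mult.assoc left_diff_distrib)
  ultimately have "e * e - e \<in> {0}" by (subst annihilator[symmetric]) blast
  then have idem: "e * e = e" by simp
  have nonzero: "e \<noteq> 0" using e(2) xy(3) by force
  have "v * e = v" if v: "v \<in> L" for v
  proof -
    obtain a where "a * e = v" using minimal_left_ideal_generated[OF L e(1) nonzero v] by blast
    then show ?thesis using idem by (metis mult.assoc)
  qed
  then show ?thesis using e idem nonzero by blast
qed

end

locale simple_k_algebra = k_algebra scale for scale :: "'k::field \<Rightarrow> 'a::ring_1 \<Rightarrow> 'a" +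
  assumes simple: "simple_algebra scale"
begin

lemma zero_neq_one: "(0::'a) \<noteq> 1"
  using simple unfolding simple_algebra_def by blast

lemma two_sided_ideal_trivial: "two_sided_ideal scale I \<Longrightarrow> I = {0} \<or> I = UNIV"
  using simple unfolding simple_algebra_def by blast

lemma commutator_space_eq_UNIV:
  assumes c: "c \<noteq> 0" and c_comm: "{c * a | a. True} \<subseteq> commutator_space scale"
  shows "commutator_space scale = UNIV"
proof -
  let ?G = "{a * c * b | a b. True}"
  have "two_sided_ideal scale (span ?G)"
  proof (rule two_sided_ideal_span)
    fix g x assume "g \<in> ?G"
    then obtain a b where "g = a * c * b" by blast
    then have "x * g = (x * a) * c * b" "g * x = a * c * (b * x)" by (simp_all add: mult.assoc)
    then show "x * g \<in> ?G \<and> g * x \<in> ?G" by blast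
  qed
  moreover have "c \<in> span ?G"
    by (rule span_base, intro CollectI exI[of _ 1]) simp
  then have "span ?G \<noteq> {0}" using c by (metis singletonD)
  ultimately have "span ?G = UNIV" using two_sided_ideal_trivial by blast
  moreover have "?G \<subseteq> commutator_space scale"
    using two_sided_multiple_in_commutator_space[OF c_comm] by blast
  then have "span ?G \<subseteq> commutator_space scale"
    by (rule span_minimal[OF _ subspace_commutator_space])
  ultimately show ?thesis by blast
qed

lemma left_ideal_square_nonzero:
  assumes L: "left_ideal L" "L \<noteq> {0}"
  shows "\<exists>x\<in>L. \<exists>y\<in>L. y * x \<noteq> 0"
proof (rule ccontr)
  assume "\<not> ?thesis"
  then have LL: "\<And>x y. x \<in> L \<Longrightarrow> y \<in> L \<Longrightarrow> y * x = 0" by blast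
  have L_mult: "\<And>a x. a \<in> L \<Longrightarrow> x * a \<in> L" using L unfolding left_ideal_def by blast
  let ?G = "{l * a | l a. l \<in> L}"
  have "two_sided_ideal scale (span ?G)"
  proof (rule two_sided_ideal_span)
    fix g x assume "g \<in> ?G"
    then obtain l a where "g = l * a" "l \<in> L" by blast
    then have "x * g = (x * l) * a" "g * x = l * (a * x)" "x * l \<in> L"
      by (simp_all add: mult.assoc L_mult)
    then show "x * g \<in> ?G \<and> g * x \<in> ?G" using \<open>l \<in> L\<close> by blast
  qed
  moreover obtain l where "l \<in> L" "l \<noteq> 0"
    using L subspace_0 unfolding left_ideal_def by blast
  then have "l * 1 \<in> span ?G" "l * 1 \<noteq> 0" by (blast intro: span_base, simp)
  then have "span ?G \<noteq> {0}" by blast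
  ultimately have one: "1 \<in> span ?G" using two_sided_ideal_trivial by blast
  have GG: "g * h = 0" if g: "g \<in> ?G" and h: "h \<in> ?G" for g h
  proof -
    obtain l a m b where "g = l * a" "l \<in> L" "h = m * b" "m \<in> L" using g h by blast
    then show ?thesis using LL[OF L_mult[of m a]] by (simp add: mult.assoc[symmetric])
  qed
  have one_G: "1 * h \<in> {0}" if h: "h \<in> ?G" for h
    using GG h by (intro span_mult_right[OF _ _ one]) simp_all
  have "(1::'a) * 1 \<in> {0}"
    by (rule span_mult_left[OF one_G _ one]) simp_all
  then show False using zero_neq_one by simp
qed

end

locale fd_simple_algebra = simple_k_algebra scale for scale :: "'k::field \<Rightarrow> 'a::ring_1 \<Rightarrow> 'a" +
  assumes finite_dimensional: "\<exists>B. finite_dimensional_vector_space scale B"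
begin

lemma ex_minimal_left_ideal: "\<exists>L. minimal_left_ideal L"
proof -
  obtain B where "finite_dimensional_vector_space scale B" using finite_dimensional by blast
  then interpret finite_dimensional_vector_space scale B .
  let ?P = "\<lambda>n. \<exists>L. left_ideal L \<and> L \<noteq> {0} \<and> dim L = n"
  have "(UNIV :: 'a set) \<noteq> {0}" using zero_neq_one by (metis UNIV_I singletonD)
  then have "?P (dim UNIV)" by (intro exI[of _ UNIV] conjI) (simp_all add: left_ideal_def)
  then have "?P (LEAST n. ?P n)" by (rule LeastI)
  then obtain L where L: "left_ideal L" "L \<noteq> {0}" "dim L = (LEAST n. ?P n)" by blast
  have least: "dim L \<le> dim L'" if "left_ideal L'" "L' \<noteq> {0}" for L'
    unfolding L(3) using that by (blast intro: Least_le)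
  have "L' = L" if "left_ideal L'" "L' \<noteq> {0}" "L' \<subseteq> L" for L'
  proof (rule subspace_dim_equal)
    show "subspace L'" "subspace L" using that(1) L(1) unfolding left_ideal_def by blast+
    show "L' \<subseteq> L" "dim L \<le> dim L'" using that least by blast+
  qed
  then show ?thesis using L unfolding minimal_left_ideal_def by blast
qed

lemma ex_minimal_left_ideal_idempotent:
  "\<exists>L e. minimal_left_ideal L \<and> e \<in> L \<and> e * e = e \<and> e \<noteq> 0 \<and> (\<forall>v\<in>L. v * e = v)"
proof -
  obtain L where L: "minimal_left_ideal L" using ex_minimal_left_ideal by blast
  then have "left_ideal L" "L \<noteq> {0}" unfolding minimal_left_ideal_def by blast+
  then obtain x y where "x \<in> L" "y \<in> L" "y * x \<noteq> 0"
    using left_ideal_square_nonzero by blast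
  then obtain e where "e \<in> L" "e * e = e \<and> e \<noteq> 0 \<and> (\<forall>v\<in>L. v * e = v)"
    using minimal_left_ideal_idempotent[OF L] by blast
  then show ?thesis using L by blast
qed

end

text \<open>\<open>L = Ae\<close> is a simple left \<open>A\<close>-module, \<open>eAe\<close> is a division ring (the opposite of
  \<open>End\<^sub>A(L)\<close>) and \<open>F\<close> is a maximal subfield of it, so \<open>L\<close> is a right \<open>F\<close>-vector space
  on which \<open>A\<close> acts \<open>F\<close>-linearly.\<close>
locale maximal_subfield = k_algebra scale for scale :: "'k::field \<Rightarrow> 'a::ring_1 \<Rightarrow> 'a" +
  fixes L :: "'a set" and e :: 'a and F :: "'a set"
  assumes minimal: "minimal_left_ideal L"
    and e_in_L: "e \<in> L" and idem: "e * e = e" and e_nonzero: "e \<noteq> 0"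
    and right_unit: "\<And>v. v \<in> L \<Longrightarrow> v * e = v"
    and F_corner: "\<And>f. f \<in> F \<Longrightarrow> e * f = f \<and> f * e = f"
    and F_commute: "\<And>f g. f \<in> F \<Longrightarrow> g \<in> F \<Longrightarrow> f * g = g * f"
    and F_maximal: "\<And>x. e * x = x \<Longrightarrow> x * e = x \<Longrightarrow> (\<forall>f\<in>F. x * f = f * x) \<Longrightarrow> x \<in> F"
begin

lemma L_subspace: "subspace L"
  using minimal unfolding minimal_left_ideal_def left_ideal_def by blast

lemma L_mult: "a \<in> L \<Longrightarrow> x * a \<in> L"
  using minimal unfolding minimal_left_ideal_def left_ideal_def by blast

lemma corner_in_L: "x * e = x \<Longrightarrow> x \<in> L"
  by (metis L_mult e_in_L)

lemma corner_inverse: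
  assumes d: "e * d = d" "d * e = d" "d \<noteq> 0"
  shows "\<exists>d'. e * d' = d' \<and> d' * e = d' \<and> d' * d = e \<and> d * d' = e"
proof -
  have left_inverse: "\<exists>d'. e * d' = d' \<and> d' * e = d' \<and> d' * x = e"
    if x: "e * x = x" "x * e = x" "x \<noteq> 0" for x
  proof -
    obtain b where b: "b * x = e"
      using minimal_left_ideal_generated[OF minimal corner_in_L[OF x(2)] x(3) e_in_L] by blast
    have "(e * b * e) * x = e"
      using b x idem by (metis mult.assoc)
    moreover have "e * (e * b * e) = e * b * e" "(e * b * e) * e = e * b * e"
      using idem by (metis mult.assoc)+
    ultimately show ?thesis by blast
  qed
  obtain d' where d': "e * d' = d'" "d' * e = d'" "d' * d = e" using left_inverse[OF d] by blast
  have "d' \<noteq> 0" using d'(3) e_nonzero by auto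
  then obtain d'' where d'': "d'' * e = d''" "d'' * d' = e" using left_inverse[OF d'(1,2)] by blast
  have "d = d''" by (metis d''(1,2) d'(3) d(1) mult.assoc)
  then show ?thesis using d' d'' by blast
qed

lemma corner_no_zero_divisors:
  assumes "u \<in> L" "u \<noteq> 0" "e * x = x" "x * e = x" "u * x = 0"
  shows "x = 0"
proof (rule ccontr)
  assume "x \<noteq> 0"
  then obtain z where "x * z = e" using corner_inverse assms(3,4) by blast
  then have "u = u * x * z" using right_unit[OF assms(1)] by (simp add: mult.assoc)
  then show False using assms(2,5) by simp
qed

lemma F_in_L: "f \<in> F \<Longrightarrow> f \<in> L"
  using F_corner corner_in_L by blast

lemma F_e: "e \<in> F"
  using F_maximal[of e] idem F_corner by auto

lemma F_0: "0 \<in> F"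
  using F_maximal[of 0] by simp

lemma F_add: "f \<in> F \<Longrightarrow> g \<in> F \<Longrightarrow> f + g \<in> F"
  using F_maximal[of "f + g"] F_corner F_commute by (simp add: distrib_left distrib_right)

lemma F_uminus: "f \<in> F \<Longrightarrow> - f \<in> F"
  using F_maximal[of "- f"] F_corner F_commute by simp

lemma F_diff: "f \<in> F \<Longrightarrow> g \<in> F \<Longrightarrow> f - g \<in> F"
  using F_add F_uminus by (metis diff_conv_add_uminus)

lemma F_mult: "f \<in> F \<Longrightarrow> g \<in> F \<Longrightarrow> f * g \<in> F"
  using F_maximal[of "f * g"] F_corner F_commute by (simp add: mult.assoc) (metis mult.assoc)

lemma F_sum: "(\<And>j. j \<in> J \<Longrightarrow> g j \<in> F) \<Longrightarrow> sum g J \<in> F"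
  by (induction J rule: infinite_finite_induct) (simp_all add: F_0 F_add)

lemma F_scale_e: "scale c e \<in> F"
proof (rule F_maximal)
  show "e * scale c e = scale c e" "scale c e * e = scale c e"
    by (simp_all add: scale_mult_left scale_mult_right idem)
  show "\<forall>f\<in>F. scale c e * f = f * scale c e"
    using F_corner by (simp add: scale_mult_left scale_mult_right)
qed

lemma F_inverse:
  assumes f: "f \<in> F" "f \<noteq> 0" shows "\<exists>g\<in>F. f * g = e"
proof -
  obtain g where g: "e * g = g" "g * e = g" "g * f = e" "f * g = e"
    using corner_inverse F_corner f by blast
  have "g * h = h * g" if h: "h \<in> F" for h
  proof -
    have "g * h = g * (h * f) * g" using g F_corner[OF h] by (metis mult.assoc)
    also have "\<dots> = g * (f * h) * g" using F_commute f h by simp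
    also have "\<dots> = h * g" using g F_corner[OF h] by (metis mult.assoc)
    finally show ?thesis .
  qed
  then have "g \<in> F" using F_maximal[OF g(1,2)] by blast
  then show ?thesis using g by blast
qed

lemma scale_eq_mult_F: "v \<in> L \<Longrightarrow> scale c v = v * scale c e"
  using right_unit by (simp add: scale_mult_right)

definition F_independent :: "'a set \<Rightarrow> bool" where
  "F_independent S \<longleftrightarrow> finite S \<and> S \<subseteq> L \<and>
     (\<forall>c. (\<forall>u\<in>S. c u \<in> F) \<longrightarrow> (\<Sum>u\<in>S. u * c u) = 0 \<longrightarrow> (\<forall>u\<in>S. c u = 0))"

definition in_F_span :: "'a set \<Rightarrow> 'a \<Rightarrow> bool" where
  "in_F_span S v \<longleftrightarrow> (\<exists>c. (\<forall>u\<in>S. c u \<in> F) \<and> v = (\<Sum>u\<in>S. u * c u))"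

lemma F_independentD:
  assumes "F_independent S" and "\<And>u. u \<in> S \<Longrightarrow> c u \<in> F" and "(\<Sum>u\<in>S. u * c u) = 0"
    and "u \<in> S"
  shows "c u = 0"
proof -
  have "\<forall>u\<in>S. c u \<in> F" using assms(2) by blast
  then show ?thesis using assms(1,3,4) unfolding F_independent_def by blast
qed

lemma F_independent_subset:
  assumes S: "F_independent S" and T: "T \<subseteq> S"
  shows "F_independent T"
  unfolding F_independent_def
proof (intro conjI allI impI ballI)
  have fin: "finite S" and SL: "S \<subseteq> L" using S unfolding F_independent_def by blast+
  then show "finite T" "T \<subseteq> L" using T finite_subset by blast+
  fix c u assume c: "\<forall>u\<in>T. c u \<in> F" and sum: "(\<Sum>u\<in>T. u * c u) = 0" and u: "u \<in> T"
  let ?c = "\<lambda>u. if u \<in> T then c u else 0"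
  have "(\<Sum>u\<in>S. u * ?c u) = (\<Sum>u\<in>T. u * ?c u)"
    by (rule sum.mono_neutral_right[OF fin T]) simp
  also have "\<dots> = 0" using sum by simp
  finally have "?c u = 0"
    by (rule F_independentD[OF S, of ?c, rotated]) (use u T c F_0 in auto)
  then show "c u = 0" using u by simp
qed

lemma F_independent_nonzero:
  assumes "F_independent S" shows "0 \<notin> S"
proof
  assume zero: "0 \<in> S"
  let ?c = "\<lambda>u::'a. if u = 0 then e else 0"
  have sum: "(\<Sum>u\<in>S. u * ?c u) = 0" by (rule sum.neutral) simp
  have "?c 0 = 0"
    by (rule F_independentD[OF assms _ sum zero]) (simp add: F_e F_0)
  then show False using e_nonzero by simp
qed

lemma F_independent_imp_independent:
  assumes S: "F_independent S" shows "independent S"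
  unfolding dependent_explicit
proof
  assume "\<exists>t u. finite t \<and> t \<subseteq> S \<and> (\<Sum>v\<in>t. scale (u v) v) = 0 \<and> (\<exists>v\<in>t. u v \<noteq> 0)"
  then obtain t u v where t: "t \<subseteq> S" "(\<Sum>v\<in>t. scale (u v) v) = 0" and v: "v \<in> t" "u v \<noteq> 0"
    by blast
  have fin: "finite S" and SL: "S \<subseteq> L" using S unfolding F_independent_def by blast+
  let ?c = "\<lambda>w. if w \<in> t then scale (u w) e else 0"
  have "(\<Sum>w\<in>S. w * ?c w) = (\<Sum>w\<in>t. w * scale (u w) e)"
    using sum.mono_neutral_right[OF fin t(1), of "\<lambda>w. w * ?c w"] by simp
  also have "\<dots> = (\<Sum>w\<in>t. scale (u w) w)"
    using t(1) SL by (intro sum.cong) (auto simp: scale_eq_mult_F)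
  finally have "?c v = 0"
    using F_independentD[OF S, of ?c v] t v F_scale_e F_0 by auto
  then show False using v e_nonzero by simp
qed

lemma F_independent_insert:
  assumes B: "F_independent B" and v: "v \<in> L" "\<not> in_F_span B v"
  shows "F_independent (insert v B)" and "v \<notin> B"
proof -
  have fin: "finite B" and BL: "B \<subseteq> L" using B unfolding F_independent_def by blast+
  show vB: "v \<notin> B"
  proof
    assume "v \<in> B"
    then have "v = (\<Sum>u\<in>B. u * (if u = v then e else 0))"
      using fin right_unit[OF v(1)] by (simp add: if_distrib[of "\<lambda>x. _ * x"] sum.delta' cong: if_cong)
    moreover have "\<forall>u\<in>B. (if u = v then e else 0) \<in> F" using F_e F_0 by simp
    ultimately have "in_F_span B v" unfolding in_F_span_def by (intro exI conjI) assumption+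
    then show False using v(2) by contradiction
  qed
  show "F_independent (insert v B)"
    unfolding F_independent_def
  proof (intro conjI allI impI ballI)
    show "finite (insert v B)" "insert v B \<subseteq> L" using fin BL v(1) by simp_all
    fix c u assume c: "\<forall>u\<in>insert v B. c u \<in> F" and sum: "(\<Sum>u\<in>insert v B. u * c u) = 0"
      and u: "u \<in> insert v B"
    have sum': "v * c v = - (\<Sum>u\<in>B. u * c u)"
      using sum fin vB by (simp add: eq_neg_iff_add_eq_0)
    have cv: "c v = 0"
    proof (rule ccontr)
      assume "c v \<noteq> 0"
      then obtain g where g: "g \<in> F" "c v * g = e" using F_inverse c by blast
      have "v = (v * c v) * g" using g right_unit[OF v(1)] by (simp add: mult.assoc)
      also have "\<dots> = (\<Sum>u\<in>B. u * (- (c u * g)))"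
        unfolding sum' by (simp add: sum_distrib_right mult.assoc sum_negf)
      finally have "in_F_span B v"
        unfolding in_F_span_def using c g F_uminus F_mult by (intro exI[of _ "\<lambda>u. - (c u * g)"]) auto
      then show False using v(2) by contradiction
    qed
    then have "(\<Sum>u\<in>B. u * c u) = 0" using sum' by simp
    then have "\<forall>u\<in>B. c u = 0" using F_independentD[OF B, of c] c by blast
    then show "c u = 0" using u cv by blast
  qed
qed

lemma F_independent_insert_not_in_span:
  assumes ind: "F_independent (insert v W)" and vW: "v \<notin> W"
  shows "\<not> in_F_span W v"
proof
  assume "in_F_span W v"
  then obtain c where c: "\<forall>u\<in>W. c u \<in> F" and v: "v = (\<Sum>u\<in>W. u * c u)"
    unfolding in_F_span_def by blast
  have fin: "finite W" and vL: "v \<in> L" using ind unfolding F_independent_def by auto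
  let ?c = "\<lambda>u. if u = v then - e else c u"
  have "(\<Sum>u\<in>W. u * ?c u) = (\<Sum>u\<in>W. u * c u)"
    using vW by (intro sum.cong) auto
  then have "(\<Sum>u\<in>insert v W. u * ?c u) = v * (- e) + (\<Sum>u\<in>W. u * c u)"
    using fin vW by simp
  also have "\<dots> = 0" using right_unit[OF vL] v by simp
  finally have "?c v = 0"
    by (rule F_independentD[OF ind, of ?c, rotated]) (use c F_e F_uminus in auto)
  then show False using e_nonzero by simp
qed

lemma ex_F_basis:
  assumes "finite_dimensional_vector_space scale K"
  shows "\<exists>B. F_independent B \<and> (\<forall>v\<in>L. in_F_span B v)"
proof -
  interpret K: finite_dimensional_vector_space scale K by (rule assms)
  have bound: "card S \<le> card K" if "F_independent S" for S
    using independent_span_bound[OF K.finite_Basis F_independent_imp_independent[OF that]]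
      K.span_Basis by auto
  let ?cards = "{card S | S. F_independent S}"
  have "F_independent {}" unfolding F_independent_def by simp
  then have "?cards \<noteq> {}" by blast
  moreover have fin: "finite ?cards"
    by (rule finite_subset[of _ "{..card K}"]) (auto dest: bound)
  ultimately have "Max ?cards \<in> ?cards" by (rule Max_in[rotated])
  then obtain B where B: "F_independent B" "card B = Max ?cards" by auto
  have "in_F_span B v" if v: "v \<in> L" for v
  proof (rule ccontr)
    assume "\<not> in_F_span B v"
    note insert = F_independent_insert[OF B(1) v this]
    then have "card (insert v B) \<in> ?cards" by blast
    then have "card (insert v B) \<le> card B" using B(2) fin by simp
    then show False using insert(2) B(1) unfolding F_independent_def by simp
  qed
  then show ?thesis using B by blast
qed

lemma elementary_ops_zero: "(\<lambda>x. 0) \<in> elementary_ops F"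
  using elementary_ops.mult[OF F_0, of 0] by simp

lemma elementary_ops_right_unit: "(\<lambda>x. x * e) \<in> elementary_ops F"
  using elementary_ops.mult[OF F_e, of 1] by simp

lemma elementary_ops_mult_right:
  "\<phi> \<in> elementary_ops F \<Longrightarrow> f \<in> F \<Longrightarrow> (\<lambda>x. \<phi> x * f) \<in> elementary_ops F"
proof (induction rule: elementary_ops.induct)
  case (mult g b)
  then show ?case using elementary_ops.mult[of "g * f" F b] F_mult by (simp add: mult.assoc)
next
  case (add \<phi> \<psi>)
  then show ?case using elementary_ops.add by (simp add: distrib_right)
qed

lemma elementary_ops_sum:
  "finite W \<Longrightarrow> (\<And>u. u \<in> W \<Longrightarrow> \<phi> u \<in> elementary_ops F) \<Longrightarrow>
    (\<lambda>x. \<Sum>u\<in>W. \<phi> u x) \<in> elementary_ops F"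
proof (induction W rule: finite_induct)
  case empty
  then show ?case using elementary_ops_zero by simp
next
  case (insert u W)
  then show ?case using elementary_ops.add[of "\<phi> u" F "\<lambda>x. \<Sum>u\<in>W. \<phi> u x"] by simp
qed

lemma elementary_ops_in_L: "\<phi> \<in> elementary_ops F \<Longrightarrow> x \<in> L \<Longrightarrow> \<phi> x \<in> L"
proof (induction rule: elementary_ops.induct)
  case (mult f a)
  then show ?case using L_mult F_in_L by (simp add: mult.assoc)
next
  case (add \<phi> \<psi>)
  then show ?case using subspace_add[OF L_subspace] by simp
qed

text \<open>The coefficient \<open>d = e a (\<psi> v)\<close>, where \<open>a u = e\<close>, lies in the corner \<open>eAe\<close> and
  commutes with \<open>F\<close>, hence lies in \<open>F\<close> by maximality.\<close>
lemma elementary_op_value_in_line: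
  assumes u: "u \<in> L" "u \<noteq> 0" and v: "v \<in> L"
    and \<psi>: "\<psi> \<in> elementary_ops F" "\<And>w. w \<in> W \<Longrightarrow> \<psi> w = 0" "\<psi> u = u"
    and kills: "\<And>\<phi>. \<phi> \<in> elementary_ops F \<Longrightarrow> (\<forall>w\<in>W. \<phi> w = 0) \<Longrightarrow> \<phi> u = 0 \<Longrightarrow> \<phi> v = 0"
  shows "\<exists>d\<in>F. \<psi> v = u * d"
proof -
  define w where "w = \<psi> v"
  have transfer: "w * f = b * w" if f: "f \<in> F" and b: "u * f = b * u" for f b
  proof -
    have "(\<lambda>x. \<psi> x * f - b * \<psi> x) v = 0"
    proof (rule kills)
      show "(\<lambda>x. \<psi> x * f - b * \<psi> x) \<in> elementary_ops F"
        by (intro elementary_ops_diff elementary_ops_mult_left elementary_ops_mult_right \<psi>(1) f)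
    qed (simp_all add: \<psi>(2,3) b)
    then show ?thesis unfolding w_def by simp
  qed
  obtain a where a: "a * u = e" using minimal_left_ideal_generated[OF minimal u e_in_L] by blast
  have ue: "u * e = u" using right_unit[OF u(1)] .
  have we: "w * e = w" unfolding w_def using right_unit elementary_ops_in_L[OF \<psi>(1) v] .
  define d where "d = e * a * w"
  have "w = u * a * w" using transfer[OF F_e, of "u * a"] a ue we by (simp add: mult.assoc)
  then have ud: "u * d = w" unfolding d_def using ue by (metis mult.assoc)
  have de: "e * d = d" "d * e = d"
    unfolding d_def using idem we by (metis mult.assoc)+
  have "d * f = f * d" if f: "f \<in> F" for f
  proof -
    have fe: "e * f = f" "f * e = f" using F_corner[OF f] by auto
    have "u * (d * f) = w * f" using ud by (metis mult.assoc)
    also have "\<dots> = u * f * a * w" using transfer[OF f, of "u * f * a"] a fe by (simp add: mult.assoc)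
    also have "\<dots> = u * (f * d)" unfolding d_def using fe(2) by (metis mult.assoc)
    finally have "u * (d * f - f * d) = 0" by (simp add: right_diff_distrib)
    moreover have "e * (d * f - f * d) = d * f - f * d" "(d * f - f * d) * e = d * f - f * d"
      using de fe by (simp_all add: right_diff_distrib left_diff_distrib mult.assoc[symmetric])
        (simp add: mult.assoc)
    ultimately have "d * f - f * d = 0" using corner_no_zero_divisors[OF u] by blast
    then show ?thesis by simp
  qed
  then have "d \<in> F" using F_maximal[OF de] by blast
  moreover have "\<psi> v = u * d" using ud w_def by simp
  ultimately show ?thesis by blast
qed

lemma in_F_span_if_annihilated:
  assumes W: "finite W" "W \<subseteq> L" "0 \<notin> W" and v: "v \<in> L"
    and \<psi>: "\<And>u. u \<in> W \<Longrightarrow> \<psi> u \<in> elementary_ops F"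
      "\<And>u w. u \<in> W \<Longrightarrow> w \<in> W - {u} \<Longrightarrow> \<psi> u w = 0" "\<And>u. u \<in> W \<Longrightarrow> \<psi> u u = u"
    and kills: "\<And>\<phi>. \<phi> \<in> elementary_ops F \<Longrightarrow> \<forall>w\<in>W. \<phi> w = 0 \<Longrightarrow> \<phi> v = 0"
  shows "in_F_span W v"
proof -
  have "\<exists>d\<in>F. \<psi> u v = u * d" if u: "u \<in> W" for u
  proof (rule elementary_op_value_in_line[where \<psi> = "\<psi> u" and W = "W - {u}"])
    show "u \<in> L" "u \<noteq> 0" using u W(2,3) by blast+
    show "\<psi> u \<in> elementary_ops F" "\<psi> u u = u" using \<psi>(1,3) u by simp_all
    show "\<And>w. w \<in> W - {u} \<Longrightarrow> \<psi> u w = 0" using \<psi>(2)[OF u] .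
    show "\<phi> v = 0" if "\<phi> \<in> elementary_ops F" "\<forall>w\<in>W - {u}. \<phi> w = 0" "\<phi> u = 0" for \<phi>
      using kills that by auto
  qed (rule v)
  then obtain d where d: "\<And>u. u \<in> W \<Longrightarrow> d u \<in> F" "\<And>u. u \<in> W \<Longrightarrow> \<psi> u v = u * d u"
    by metis
  let ?\<chi> = "\<lambda>x. x * e - (\<Sum>u\<in>W. \<psi> u x)"
  have "?\<chi> \<in> elementary_ops F"
    using \<psi>(1) by (intro elementary_ops_diff elementary_ops_right_unit elementary_ops_sum W(1))
  moreover have "\<forall>w\<in>W. ?\<chi> w = 0"
  proof
    fix w assume w: "w \<in> W"
    have "(\<Sum>u\<in>W. \<psi> u w) = \<psi> w w + (\<Sum>u\<in>W - {w}. \<psi> u w)"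
      using W(1) w by (rule sum.remove)
    also have "(\<Sum>u\<in>W - {w}. \<psi> u w) = 0"
      using \<psi>(2) w by (intro sum.neutral) blast
    finally have "(\<Sum>u\<in>W. \<psi> u w) = w" using \<psi>(3)[OF w] by simp
    then show "?\<chi> w = 0" using right_unit w W(2) by auto
  qed
  ultimately have "?\<chi> v = 0" by (rule kills)
  then have "v = (\<Sum>u\<in>W. u * d u)" using right_unit[OF v] d(2) by simp
  then show "in_F_span W v" unfolding in_F_span_def using d(1) by blast
qed

text \<open>Jacobson density for the simple module \<open>L\<close> over \<open>A \<otimes> F\<^sup>o\<^sup>p\<close>, whose commutant is \<open>F\<close>
  by the maximality of \<open>F\<close>.\<close>
theorem density:
  assumes "F_independent (insert v W)" and "v \<notin> W"
  shows "\<exists>\<phi>\<in>elementary_ops F. (\<forall>w\<in>W. \<phi> w = 0) \<and> \<phi> v = v"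
  using assms
proof (induction "card W" arbitrary: W v rule: less_induct)
  case less
  have fin: "finite W" and vL: "v \<in> L" and WL: "W \<subseteq> L"
    using less.prems(1) unfolding F_independent_def by auto
  have W_ind: "F_independent W" using F_independent_subset[OF less.prems(1)] by blast
  have "\<exists>\<psi>\<in>elementary_ops F. (\<forall>w\<in>W - {u}. \<psi> w = 0) \<and> \<psi> u = u" if u: "u \<in> W" for u
  proof (rule less.hyps)
    show "card (W - {u}) < card W" using fin u by (rule card_Diff1_less)
    show "F_independent (insert u (W - {u}))" using u W_ind by (simp add: insert_absorb)
  qed simp
  then obtain \<psi> where \<psi>: "\<And>u. u \<in> W \<Longrightarrow> \<psi> u \<in> elementary_ops F"
    "\<And>u w. u \<in> W \<Longrightarrow> w \<in> W - {u} \<Longrightarrow> \<psi> u w = 0" "\<And>u. u \<in> W \<Longrightarrow> \<psi> u u = u"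
    by metis
  show ?case
  proof (cases "\<exists>\<phi>\<in>elementary_ops F. (\<forall>w\<in>W. \<phi> w = 0) \<and> \<phi> v \<noteq> 0")
    case True
    then obtain \<phi> where \<phi>: "\<phi> \<in> elementary_ops F" "\<forall>w\<in>W. \<phi> w = 0" "\<phi> v \<noteq> 0" by blast
    obtain a where "a * \<phi> v = v"
      using minimal_left_ideal_generated[OF minimal elementary_ops_in_L[OF \<phi>(1) vL] \<phi>(3) vL] by blast
    then have "(\<forall>w\<in>W. (\<lambda>x. a * \<phi> x) w = 0) \<and> (\<lambda>x. a * \<phi> x) v = v" using \<phi>(2) by simp
    then show ?thesis
      using elementary_ops_mult_left[OF \<phi>(1), of a] by (rule bexI[where x = "\<lambda>x. a * \<phi> x"])
  next
    case False
    have "in_F_span W v"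
      using fin WL F_independent_nonzero[OF W_ind] vL \<psi>
      by (rule in_F_span_if_annihilated) (use False in auto)
    then show ?thesis using F_independent_insert_not_in_span[OF less.prems] by contradiction
  qed
qed

end

locale F_basis = maximal_subfield scale L e F
  for scale :: "'k::field \<Rightarrow> 'a::ring_1 \<Rightarrow> 'a" and L e F +
  fixes B :: "'a set"
  assumes B_independent: "F_independent B" and B_spans: "\<And>v. v \<in> L \<Longrightarrow> in_F_span B v"
begin

lemma B_finite: "finite B" and B_subset_L: "B \<subseteq> L"
  using B_independent unfolding F_independent_def by blast+

lemma B_mult_in_L: "u \<in> B \<Longrightarrow> a * u \<in> L"
  using B_subset_L L_mult by blast

definition coord :: "'a \<Rightarrow> 'a \<Rightarrow> 'a" where
  "coord v = (SOME c. (\<forall>u\<in>B. c u \<in> F) \<and> v = (\<Sum>u\<in>B. u * c u))"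

lemma coord_in_F: "v \<in> L \<Longrightarrow> u \<in> B \<Longrightarrow> coord v u \<in> F"
  and coord_expansion: "v \<in> L \<Longrightarrow> v = (\<Sum>u\<in>B. u * coord v u)"
proof -
  assume "v \<in> L"
  then have "\<exists>c. (\<forall>u\<in>B. c u \<in> F) \<and> v = (\<Sum>u\<in>B. u * c u)"
    using B_spans unfolding in_F_span_def by blast
  then have "(\<forall>u\<in>B. coord v u \<in> F) \<and> v = (\<Sum>u\<in>B. u * coord v u)"
    unfolding coord_def by (rule someI_ex)
  then show "u \<in> B \<Longrightarrow> coord v u \<in> F" "v = (\<Sum>u\<in>B. u * coord v u)" by blast+
qed

lemma coord_unique:
  assumes v: "v \<in> L" and c: "\<And>u. u \<in> B \<Longrightarrow> c u \<in> F" and v_eq: "v = (\<Sum>u\<in>B. u * c u)"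
    and u: "u \<in> B"
  shows "coord v u = c u"
proof -
  have "(\<Sum>u\<in>B. u * (coord v u - c u)) = (\<Sum>u\<in>B. u * coord v u) - (\<Sum>u\<in>B. u * c u)"
    by (simp add: right_diff_distrib sum_subtractf)
  also have "\<dots> = 0" using coord_expansion[OF v] v_eq by simp
  finally have "coord v u - c u = 0"
    by (rule F_independentD[OF B_independent, rotated]) (use u coord_in_F[OF v] c F_diff in auto)
  then show ?thesis by simp
qed

lemma coord_add:
  assumes "v \<in> L" "w \<in> L" "u \<in> B"
  shows "coord (v + w) u = coord v u + coord w u"
proof (rule coord_unique)
  show "v + w \<in> L" using assms subspace_add[OF L_subspace] by blast
  show "coord v u + coord w u \<in> F" if "u \<in> B" for u
    using assms that by (simp add: F_add coord_in_F)
  show "v + w = (\<Sum>u\<in>B. u * (coord v u + coord w u))"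
    using coord_expansion assms by (simp add: distrib_left sum.distrib)
qed (rule assms(3))

lemma coord_diff:
  assumes "v \<in> L" "w \<in> L" "u \<in> B"
  shows "coord (v - w) u = coord v u - coord w u"
proof (rule coord_unique)
  show "v - w \<in> L" using assms subspace_diff[OF L_subspace] by blast
  show "coord v u - coord w u \<in> F" if "u \<in> B" for u
    using assms that by (simp add: F_diff coord_in_F)
  show "v - w = (\<Sum>u\<in>B. u * (coord v u - coord w u))"
    using coord_expansion assms by (simp add: right_diff_distrib sum_subtractf)
qed (rule assms(3))

lemma coord_mult_F:
  assumes "v \<in> L" "f \<in> F" "u \<in> B"
  shows "coord (v * f) u = coord v u * f"
proof (rule coord_unique)
  show "v * f \<in> L" using assms L_mult F_in_L by blast
  show "coord v u * f \<in> F" if "u \<in> B" for u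
    using assms that by (simp add: F_mult coord_in_F)
  have "v * f = (\<Sum>u\<in>B. u * coord v u) * f"
    using coord_expansion[OF assms(1)] by (rule arg_cong)
  then show "v * f = (\<Sum>u\<in>B. u * (coord v u * f))" by (simp add: sum_distrib_right mult.assoc)
qed (rule assms(3))

lemma coord_zero: "u \<in> B \<Longrightarrow> coord 0 u = 0"
  by (rule coord_unique) (simp_all add: subspace_0[OF L_subspace] F_0)

lemma coord_basis: "b \<in> B \<Longrightarrow> u \<in> B \<Longrightarrow> coord b u = (if u = b then e else 0)"
proof (rule coord_unique)
  assume b: "b \<in> B"
  show "b \<in> L" using b B_subset_L by blast
  show "(if u = b then e else 0) \<in> F" for u using F_e F_0 by simp
  have "(\<Sum>u\<in>B. u * (if u = b then e else 0)) = b * e"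
    using b B_finite by (simp add: if_distrib[of "\<lambda>x. _ * x"] sum.delta' cong: if_cong)
  then show "b = (\<Sum>u\<in>B. u * (if u = b then e else 0))" using right_unit b B_subset_L by auto
qed

lemma coord_mult:
  assumes w: "w \<in> L" and i: "i \<in> B"
  shows "coord (a * w) i = (\<Sum>j\<in>B. coord (a * j) i * coord w j)"
proof (rule coord_unique[OF L_mult[OF w] _ _ i])
  have aB: "a * j \<in> L" if "j \<in> B" for j using that B_subset_L L_mult by blast
  show "(\<Sum>j\<in>B. coord (a * j) i' * coord w j) \<in> F" if i': "i' \<in> B" for i'
    by (rule F_sum, rule F_mult) (simp_all add: coord_in_F aB w i')
  have "a * w = a * (\<Sum>j\<in>B. j * coord w j)"
    using coord_expansion[OF w] by (rule arg_cong)
  also have "\<dots> = (\<Sum>j\<in>B. (a * j) * coord w j)"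
    by (simp add: sum_distrib_left mult.assoc)
  also have "\<dots> = (\<Sum>j\<in>B. (\<Sum>i\<in>B. i * coord (a * j) i) * coord w j)"
  proof (rule sum.cong[OF refl])
    fix j assume "j \<in> B"
    then have "a * j = (\<Sum>i\<in>B. i * coord (a * j) i)" using aB coord_expansion by blast
    then show "(a * j) * coord w j = (\<Sum>i\<in>B. i * coord (a * j) i) * coord w j" by (rule arg_cong)
  qed
  also have "\<dots> = (\<Sum>j\<in>B. \<Sum>i\<in>B. i * (coord (a * j) i * coord w j))"
    by (simp add: sum_distrib_right mult.assoc)
  also have "\<dots> = (\<Sum>i\<in>B. \<Sum>j\<in>B. i * (coord (a * j) i * coord w j))"
    by (rule sum.swap)
  also have "\<dots> = (\<Sum>i\<in>B. i * (\<Sum>j\<in>B. coord (a * j) i * coord w j))"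
    by (simp add: sum_distrib_left)
  finally show "a * w = (\<Sum>i\<in>B. i * (\<Sum>j\<in>B. coord (a * j) i * coord w j))" .
qed

definition op_trace :: "('a \<Rightarrow> 'a) \<Rightarrow> 'a" where
  "op_trace \<phi> = (\<Sum>u\<in>B. coord (\<phi> u) u)"

definition trace :: "'a \<Rightarrow> 'a" where
  "trace a = op_trace (\<lambda>x. a * x)"

lemma trace_commute: "trace (x * y) = trace (y * x)"
proof -
  have "trace (x * y) = (\<Sum>u\<in>B. \<Sum>j\<in>B. coord (x * j) u * coord (y * u) j)"
    unfolding trace_def op_trace_def
    by (intro sum.cong refl) (simp add: mult.assoc coord_mult B_mult_in_L)
  also have "\<dots> = (\<Sum>u\<in>B. \<Sum>j\<in>B. coord (y * u) j * coord (x * j) u)"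
    by (intro sum.cong refl) (simp add: F_commute coord_in_F B_mult_in_L)
  also have "\<dots> = (\<Sum>j\<in>B. \<Sum>u\<in>B. coord (y * u) j * coord (x * j) u)"
    by (rule sum.swap)
  also have "\<dots> = trace (y * x)"
    unfolding trace_def op_trace_def
    by (intro sum.cong refl) (simp add: mult.assoc coord_mult B_mult_in_L)
  finally show ?thesis .
qed

lemma trace_diff: "trace (a - b) = trace a - trace b"
  unfolding trace_def op_trace_def
  by (simp add: left_diff_distrib coord_diff B_mult_in_L sum_subtractf)

lemma trace_scale: "trace (scale c a) = trace a * scale c e"
proof -
  have "trace (scale c a) = (\<Sum>u\<in>B. coord ((a * u) * scale c e) u)"
    unfolding trace_def op_trace_def
    by (intro sum.cong refl) (simp add: scale_mult_left scale_eq_mult_F B_mult_in_L)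
  also have "\<dots> = trace a * scale c e"
    unfolding trace_def op_trace_def
    by (simp add: coord_mult_F B_mult_in_L F_scale_e sum_distrib_right)
  finally show ?thesis .
qed

lemma trace_commutator_space: "a \<in> commutator_space scale \<Longrightarrow> trace a = 0"
proof -
  have "subspace {a. trace a = 0}"
  proof (rule subspaceI)
    show "0 \<in> {a. trace a = 0}" using trace_diff[of 0 0] by simp
    show "x + y \<in> {a. trace a = 0}" if "x \<in> {a. trace a = 0}" "y \<in> {a. trace a = 0}" for x y
      using that trace_diff[of x "- y"] trace_diff[of 0 y] trace_diff[of 0 0] by simp
    show "scale c x \<in> {a. trace a = 0}" if "x \<in> {a. trace a = 0}" for c x
      using that trace_scale by simp
  qed
  moreover have "{x * y - y * x | x y. True} \<subseteq> {a. trace a = 0}"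
    using trace_diff trace_commute by auto
  ultimately show "a \<in> commutator_space scale \<Longrightarrow> trace a = 0"
    unfolding commutator_space_def using span_minimal by blast
qed

lemma op_trace_elementary_op:
  assumes trace_0: "\<And>a. trace a = 0" and \<phi>: "\<phi> \<in> elementary_ops F"
  shows "op_trace \<phi> = 0"
  using \<phi>
proof (induction rule: elementary_ops.induct)
  case (mult f a)
  have "op_trace (\<lambda>x. a * x * f) = trace a * f"
    unfolding trace_def op_trace_def
    using mult by (simp add: coord_mult_F B_mult_in_L sum_distrib_right)
  then show ?case using trace_0 by simp
next
  case (add \<phi> \<psi>)
  have "op_trace (\<lambda>x. \<phi> x + \<psi> x) = op_trace \<phi> + op_trace \<psi>"
    unfolding op_trace_def
    using add.hyps B_subset_L by (simp add: coord_add elementary_ops_in_L subset_iff sum.distrib)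
  then show ?case using add.IH by simp
qed

lemma ex_trace_nonzero: "\<exists>a. trace a \<noteq> 0"
proof (rule ccontr)
  assume "\<nexists>a. trace a \<noteq> 0"
  then have trace_0: "\<And>a. trace a = 0" by blast
  have "B \<noteq> {}"
  proof
    assume "B = {}"
    then show False using B_spans[OF e_in_L] e_nonzero unfolding in_F_span_def by simp
  qed
  then obtain b where b: "b \<in> B" by blast
  have "F_independent (insert b (B - {b}))" using b B_independent by (simp add: insert_absorb)
  then obtain \<phi> where \<phi>: "\<phi> \<in> elementary_ops F" "\<forall>u\<in>B - {b}. \<phi> u = 0" "\<phi> b = b"
    using density by blast
  have "op_trace \<phi> = coord (\<phi> b) b + (\<Sum>u\<in>B - {b}. coord (\<phi> u) u)"
    unfolding op_trace_def using B_finite b by (rule sum.remove)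
  also have "(\<Sum>u\<in>B - {b}. coord (\<phi> u) u) = 0"
    using \<phi>(2) coord_zero by (intro sum.neutral) simp
  also have "coord (\<phi> b) b = e" using \<phi>(3) coord_basis[OF b b] by simp
  finally show False using op_trace_elementary_op[OF trace_0 \<phi>(1)] e_nonzero by simp
qed

end

context fd_simple_algebra
begin

lemma commutator_space_neq_UNIV: "commutator_space scale \<noteq> UNIV"
proof -
  obtain L e where L: "minimal_left_ideal L"
    and e: "e \<in> L" "e * e = e" "e \<noteq> 0" "\<forall>v\<in>L. v * e = v"
    using ex_minimal_left_ideal_idempotent by blast
  obtain F where F: "F \<subseteq> {x. e * x = x \<and> x * e = x}" "pairwise_commuting F"
    and F_max: "\<forall>x\<in>{x. e * x = x \<and> x * e = x}. (\<forall>f\<in>F. x * f = f * x) \<longrightarrow> x \<in> F"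
    using ex_maximal_commuting_subset by blast
  interpret maximal_subfield scale L e F
  proof unfold_locales
    show "minimal_left_ideal L" "e \<in> L" "e * e = e" "e \<noteq> 0" by (fact L e(1-3))+
    show "\<And>v. v \<in> L \<Longrightarrow> v * e = v" using e(4) by blast
    show "\<And>f. f \<in> F \<Longrightarrow> e * f = f \<and> f * e = f" using F(1) by blast
    show "\<And>f g. f \<in> F \<Longrightarrow> g \<in> F \<Longrightarrow> f * g = g * f"
      using F(2) unfolding pairwise_commuting_def by blast
    show "\<And>x. e * x = x \<Longrightarrow> x * e = x \<Longrightarrow> \<forall>f\<in>F. x * f = f * x \<Longrightarrow> x \<in> F"
      using F_max by blast
  qed
  obtain K where "finite_dimensional_vector_space scale K" using finite_dimensional by blast
  then obtain B where "F_independent B" "\<forall>v\<in>L. in_F_span B v" using ex_F_basis by blast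
  then interpret F_basis scale L e F B by unfold_locales blast+
  obtain a where "trace a \<noteq> 0" using ex_trace_nonzero by blast
  then show ?thesis using trace_commutator_space by blast
qed

end

theorem lemma2p1:
  fixes scale :: "'k::field \<Rightarrow> 'a::ring_1 \<Rightarrow> 'a" and c :: 'a
  assumes "fin_dim_algebra scale"
    and "simple_algebra scale"
    and "{c * a | a. True} \<subseteq> commutator_space scale"
  shows "c = 0"
proof (rule ccontr)
  assume "c \<noteq> 0"
  have "assoc_algebra scale" "\<exists>B. finite_dimensional_vector_space scale B"
    using assms(1) unfolding fin_dim_algebra_def by blast+
  then interpret fd_simple_algebra scale
    using assms(2) by unfold_locales
  have "commutator_space scale = UNIV" using commutator_space_eq_UNIV \<open>c \<noteq> 0\<close> assms(3) .
  then show False using commutator_space_neq_UNIV by contradiction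
qed

end
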